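(* Let $q$ be a prime power with $q\equiv 1 \pmod 3$, let $\delta\in\mathbb{F}_q$ be a cubic nonresidue, and let $\mathbb{F}_q(\delta^{1/3})$ be the cubic extension with $\mathbb{F}_q$-basis $\{1,\delta^{1/3},\delta^{2/3}\}$; write $\alpha=\alpha_1+\alpha_2\delta^{1/3}+\alpha_3\delta^{2/3}$ with $\alpha_i\in\mathbb{F}_q$. Let $\mathbb{H}_q=\{(\alpha,\beta)\in \mathbb{F}_q(\delta^{1/3})^2 : \alpha_2\beta_3-\alpha_3\beta_2\neq 0\}$ with the action of $\mathrm{GL}_3(\mathbb{F}_q)$ given by \[ \begin{bmatrix} a & b & c\\ d & e & f\\ r & s & t \end{bmatrix} (\alpha,\beta) = \left(\frac{a\alpha+b\beta+c}{r\alpha+s\beta+t}, \frac{d\alpha+e\beta+f}{r\alpha+s\beta+t} \right). \] Let $B\le\mathrm{GL}_3(\mathbb{F}_q)$ be the Borel subgroup of invertible upper-triangular matrices. Then \[\{(\delta^{1/3},\,v\delta^{1/3}+\delta^{2/3}) : v\in\mathbb{F}_q\}\ \sqcup\ \{(\delta^{2/3},\,\delta^{1/3})\}\] is a fundamental domain for the action of $B$ on $\mathbb{H}_q$.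
   Context: A fundamental domain for the action of a subgroup $H$ on $\mathbb{H}_q$ is a subset of $\mathbb{H}_q$ containing exactly one element of each $H$-orbit. A cubic nonresidue is an element of $\mathbb{F}_q^\times$ that is not a cube in $\mathbb{F}_q$. *)

theory Defs
  imports "HOL-Analysis.Analysis"
begin

text \<open>Elements of the cubic extension F_q(delta^(1/3)) are represented by their
coordinates (x1, x2, x3) with respect to the F_q-basis 1, delta^(1/3), delta^(2/3).\<close>

type_synonym 'a cubext = "'a \<times> 'a \<times> 'a"

definition cubic_nonresidue :: "'a::field \<Rightarrow> bool" where
  "cubic_nonresidue d \<longleftrightarrow> d \<noteq> 0 \<and> \<not> (\<exists>x. x ^ 3 = d)"

definition cconst :: "'a::field \<Rightarrow> 'a cubext" where
  "cconst c = (c, 0, 0)"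

definition cadd :: "'a::field cubext \<Rightarrow> 'a cubext \<Rightarrow> 'a cubext" where
  "cadd x y = (case x of (x1, x2, x3) \<Rightarrow> case y of (y1, y2, y3) \<Rightarrow>
     (x1 + y1, x2 + y2, x3 + y3))"

definition csmul :: "'a::field \<Rightarrow> 'a cubext \<Rightarrow> 'a cubext" where
  "csmul c x = (case x of (x1, x2, x3) \<Rightarrow> (c * x1, c * x2, c * x3))"

text \<open>Multiplication in F_q(theta), theta^3 = delta.\<close>
definition cmul :: "'a::field \<Rightarrow> 'a cubext \<Rightarrow> 'a cubext \<Rightarrow> 'a cubext" where
  "cmul d x y = (case x of (x1, x2, x3) \<Rightarrow> case y of (y1, y2, y3) \<Rightarrow>
     (x1 * y1 + d * (x2 * y3 + x3 * y2),
      x1 * y2 + x2 * y1 + d * (x3 * y3),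
      x1 * y3 + x2 * y2 + x3 * y1))"

definition cinv :: "'a::field \<Rightarrow> 'a cubext \<Rightarrow> 'a cubext" where
  "cinv d y = (THE z. cmul d y z = cconst 1)"

definition cdiv :: "'a::field \<Rightarrow> 'a cubext \<Rightarrow> 'a cubext \<Rightarrow> 'a cubext" where
  "cdiv d x y = cmul d x (cinv d y)"

definition Hq :: "('a::field cubext \<times> 'a cubext) set" where
  "Hq = {((a1, a2, a3), (b1, b2, b3)). a2 * b3 - a3 * b2 \<noteq> 0}"

definition gl3_act :: "'a::field \<Rightarrow> 'a ^ 3 ^ 3 \<Rightarrow> 'a cubext \<times> 'a cubext \<Rightarrow> 'a cubext \<times> 'a cubext" where
  "gl3_act d A p = (case p of (\<alpha>, \<beta>) \<Rightarrow>
     (let den = cadd (cadd (csmul (A$3$1) \<alpha>) (csmul (A$3$2) \<beta>)) (cconst (A$3$3))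
      in (cdiv d (cadd (cadd (csmul (A$1$1) \<alpha>) (csmul (A$1$2) \<beta>)) (cconst (A$1$3))) den,
          cdiv d (cadd (cadd (csmul (A$2$1) \<alpha>) (csmul (A$2$2) \<beta>)) (cconst (A$2$3))) den)))"

definition borel3 :: "('a::field ^ 3 ^ 3) set" where
  "borel3 = {A. invertible A \<and> A$2$1 = 0 \<and> A$3$1 = 0 \<and> A$3$2 = 0}"

definition orbit :: "'a::field \<Rightarrow> ('a ^ 3 ^ 3) set \<Rightarrow> 'a cubext \<times> 'a cubext
     \<Rightarrow> ('a cubext \<times> 'a cubext) set" where
  "orbit d G p = {gl3_act d A p | A. A \<in> G}"

definition fundamental_domain ::
  "'a::field \<Rightarrow> ('a ^ 3 ^ 3) set \<Rightarrow> ('a cubext \<times> 'a cubext) set \<Rightarrow> ('a cubext \<times> 'a cubext) set \<Rightarrow> bool" where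
  "fundamental_domain d G X D \<longleftrightarrow> D \<subseteq> X \<and> (\<forall>p\<in>X. \<exists>!y. y \<in> D \<and> y \<in> orbit d G p)"

end

theory Submission
  imports Defs
begin

text \<open>A Borel matrix has bottom row (0, 0, t) with t \<noteq> 0, so it acts by the affine map
  (\<alpha>, \<beta>) \<mapsto> ((a\<alpha> + b\<beta> + c)/t, (e\<beta> + f)/t) and no division in the cubic extension is needed. On the coordinates at
  \<delta>^(1/3), \<delta>^(2/3) the map is linear and scales the determinant a2 b3 - a3 b2 by a e / t^2.
  Hence the orbit of a point of H_q consists of the points of H_q whose \<beta>-part (\<beta>2 : \<beta>3) is the
  same point of the projective line, and the given set hits each point [v : 1], [1 : 0] of
  that line exactly once.\<close>

lemma cinv_cconst:
  fixes t :: "'a::field"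
  assumes "t \<noteq> 0"
  shows "cinv d (cconst t) = cconst (1 / t)"
  unfolding cinv_def
proof (rule the_equality)
  show "cmul d (cconst t) (cconst (1 / t)) = cconst 1"
    using assms by (simp add: cmul_def cconst_def)
next
  fix z assume "cmul d (cconst t) z = cconst 1"
  then show "z = cconst (1 / t)"
    using assms by (cases z) (auto simp: cmul_def cconst_def field_simps)
qed

lemma gl3_act_affine:
  fixes A :: "'a::field ^ 3 ^ 3"
  assumes "A$3$1 = 0" "A$3$2 = 0" "A$3$3 \<noteq> 0"
  shows "gl3_act d A ((a1, a2, a3), (b1, b2, b3)) =
    (((A$1$1 * a1 + A$1$2 * b1 + A$1$3) / A$3$3,
      (A$1$1 * a2 + A$1$2 * b2) / A$3$3, (A$1$1 * a3 + A$1$2 * b3) / A$3$3),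
     ((A$2$1 * a1 + A$2$2 * b1 + A$2$3) / A$3$3,
      (A$2$1 * a2 + A$2$2 * b2) / A$3$3, (A$2$1 * a3 + A$2$2 * b3) / A$3$3))"
  using assms cinv_cconst[of "A$3$3" d]
  by (simp add: gl3_act_def Let_def cadd_def csmul_def cconst_def cdiv_def cmul_def field_simps)

lemma borel3_iff:
  fixes A :: "'a::field ^ 3 ^ 3"
  shows "A \<in> borel3 \<longleftrightarrow> A$2$1 = 0 \<and> A$3$1 = 0 \<and> A$3$2 = 0 \<and>
           A$1$1 \<noteq> 0 \<and> A$2$2 \<noteq> 0 \<and> A$3$3 \<noteq> 0"
  by (auto simp: borel3_def invertible_det_nz det_3)

definition proj_eq :: "'a::field \<times> 'a \<Rightarrow> 'a \<times> 'a \<Rightarrow> bool" where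
  "proj_eq x y \<longleftrightarrow> (\<exists>k. k \<noteq> 0 \<and> x = (k * fst y, k * snd y))"

lemma orbit_borel3_iff:
  assumes "p \<in> Hq"
  shows "q \<in> orbit d borel3 p \<longleftrightarrow> q \<in> Hq \<and> proj_eq (snd (snd q)) (snd (snd p))"
proof -
  obtain a1 a2 a3 b1 b2 b3 where p: "p = ((a1, a2, a3), (b1, b2, b3))"
    by (metis prod.exhaust)
  obtain x1 x2 x3 y1 y2 y3 where q: "q = ((x1, x2, x3), (y1, y2, y3))"
    by (metis prod.exhaust)
  define D where "D = a2 * b3 - a3 * b2"
  have "D \<noteq> 0" using assms by (simp add: p Hq_def D_def)
  show ?thesis
  proof
    assume "q \<in> orbit d borel3 p"
    then obtain A where A: "A \<in> borel3" "q = gl3_act d A p"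
      unfolding orbit_def by blast
    have entries: "A$2$1 = 0" "A$3$1 = 0" "A$3$2 = 0" "A$1$1 \<noteq> 0" "A$2$2 \<noteq> 0" "A$3$3 \<noteq> 0"
      using A(1) by (simp_all add: borel3_iff)
    have xy: "x2 = (A$1$1 * a2 + A$1$2 * b2) / A$3$3" "x3 = (A$1$1 * a3 + A$1$2 * b3) / A$3$3"
      "y2 = A$2$2 * b2 / A$3$3" "y3 = A$2$2 * b3 / A$3$3"
      using A(2) entries by (simp_all add: p q gl3_act_affine)
    have "x2 * y3 - x3 * y2 = A$1$1 * A$2$2 / (A$3$3)\<^sup>2 * D"
      unfolding xy using entries by (simp add: D_def field_simps power2_eq_square)
    also have "\<dots> \<noteq> 0"
      using entries \<open>D \<noteq> 0\<close> by simp
    finally have "q \<in> Hq"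
      by (simp add: q Hq_def)
    moreover have "proj_eq (snd (snd q)) (snd (snd p))"
      unfolding proj_eq_def
      by (rule exI[of _ "A$2$2 / A$3$3"]) (use A(2) entries in \<open>simp add: p gl3_act_affine\<close>)
    ultimately show "q \<in> Hq \<and> proj_eq (snd (snd q)) (snd (snd p))" ..
  next
    assume "q \<in> Hq \<and> proj_eq (snd (snd q)) (snd (snd p))"
    then obtain k where k: "k \<noteq> 0" "y2 = k * b2" "y3 = k * b3" and "x2 * y3 - x3 * y2 \<noteq> 0"
      by (auto simp: p q Hq_def proj_eq_def)
    \<comment> \<open>solve a (a2, a3) + b (b2, b3) = (x2, x3) by Cramer's rule\<close>
    define a b where "a = (x2 * b3 - x3 * b2) / D" and "b = (a2 * x3 - a3 * x2) / D"
    have "x2 * y3 - x3 * y2 = k * (x2 * b3 - x3 * b2)"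
      using k by (simp add: algebra_simps)
    then have "a \<noteq> 0"
      using \<open>x2 * y3 - x3 * y2 \<noteq> 0\<close> \<open>D \<noteq> 0\<close> by (auto simp: a_def)
    have "a * a2 + b * b2 = x2" "a * a3 + b * b3 = x3"
      using \<open>D \<noteq> 0\<close> by (simp_all add: a_def b_def field_simps, simp_all add: D_def algebra_simps)
    define A :: "'a ^ 3 ^ 3" where "A = vector [vector [a, b, x1 - a * a1 - b * b1],
      vector [0, k, y1 - k * b1], vector [0, 0, 1]]"
    have "A \<in> borel3"
      using \<open>a \<noteq> 0\<close> \<open>k \<noteq> 0\<close> by (simp add: A_def borel3_iff)
    moreover have "gl3_act d A p = q"
      using \<open>a * a2 + b * b2 = x2\<close> \<open>a * a3 + b * b3 = x3\<close> k
      by (simp add: A_def p q gl3_act_affine)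
    ultimately show "q \<in> orbit d borel3 p"
      unfolding orbit_def by blast
  qed
qed

lemma ex1_normal_form_proj_eq:
  fixes w :: "'a::field \<times> 'a"
  assumes "w \<noteq> (0, 0)"
  shows "\<exists>!y. y \<in> {((0, 1, 0), (0, v, 1)) | v. True} \<union> {((0, 0, 1), (0, 1, 0))}
                \<and> proj_eq (snd (snd y)) w"
    (is "\<exists>!y. y \<in> ?D \<and> _")
proof -
  obtain w2 w3 where w: "w = (w2, w3)" by fastforce
  show ?thesis
  proof (rule ex_ex1I)
    show "\<exists>y. y \<in> ?D \<and> proj_eq (snd (snd y)) w"
    proof (cases "w3 = 0")
      case True
      then have "proj_eq (1, 0) w" using assms by (auto simp: w proj_eq_def intro!: exI[of _ "1 / w2"])
      then show ?thesis by (intro exI[of _ "((0, 0, 1), (0, 1, 0))"]) simp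
    next
      case False
      then have "proj_eq (w2 / w3, 1) w" by (auto simp: w proj_eq_def intro!: exI[of _ "1 / w3"])
      then show ?thesis by (intro exI[of _ "((0, 1, 0), (0, w2 / w3, 1))"]) simp
    qed
  next
    fix y z
    assume y: "y \<in> ?D \<and> proj_eq (snd (snd y)) w" and z: "z \<in> ?D \<and> proj_eq (snd (snd z)) w"
    then obtain k l where "k \<noteq> 0" "l \<noteq> 0" "snd (snd y) = (k * w2, k * w3)"
      "snd (snd z) = (l * w2, l * w3)"
      by (auto simp: w proj_eq_def)
    moreover have "k = l" if "k * w3 = 1" "l * w3 = 1"
      using that by algebra
    ultimately show "y = z"
      using y z by auto
  qed
qed

theorem proposition5p2:
  fixes \<delta> :: "'a::{finite, field}"
  assumes "CARD('a) mod 3 = 1"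
    and "cubic_nonresidue \<delta>"
  shows "fundamental_domain \<delta> borel3 Hq
           ({((0, 1, 0), (0, v, 1)) | v. True} \<union> {((0, 0, 1), (0, 1, 0))})"
  (is "fundamental_domain _ _ _ ?D")
  unfolding fundamental_domain_def
proof (intro conjI ballI)
  show "?D \<subseteq> Hq" by (auto simp: Hq_def)
  fix p :: "'a cubext \<times> 'a cubext"
  assume "p \<in> Hq"
  have "y \<in> ?D \<and> y \<in> orbit \<delta> borel3 p \<longleftrightarrow> y \<in> ?D \<and> proj_eq (snd (snd y)) (snd (snd p))" for y
    using \<open>?D \<subseteq> Hq\<close> orbit_borel3_iff[OF \<open>p \<in> Hq\<close>] by blast
  moreover have "\<exists>!y. y \<in> ?D \<and> proj_eq (snd (snd y)) (snd (snd p))"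
    using \<open>p \<in> Hq\<close> by (intro ex1_normal_form_proj_eq) (auto simp: Hq_def split: prod.splits)
  ultimately show "\<exists>!y. y \<in> ?D \<and> y \<in> orbit \<delta> borel3 p"
    by (simp only:)
qed

end
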